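(* Let $N_{\mathbf u}, N_{\boldsymbol\mu}, N_t, s$ be positive integers. Let $\mathbb M\in\mathbb R^{N_{\mathbf u}\times N_{\mathbf u}}$ be a fixed mass matrix and $\mathbf r:\mathbb R^{N_{\mathbf u}}\times\mathbb R^{N_{\boldsymbol\mu}}\times\mathbb R\to\mathbb R^{N_{\mathbf u}}$ continuously differentiable. Let $(a_{ij})_{1\le i,j\le s}$, $(b_i)$, $(c_i)$ be the coefficients of an $s$-stage diagonally implicit Runge–Kutta (DIRK) scheme ($a_{ij}=0$ for $j>i$), let $\Delta t_1,\dots,\Delta t_{N_t}>0$, $t_0=0$, $t_n=t_{n-1}+\Delta t_n$. Fix $\boldsymbol\mu$ and let $\mathbf u^{(0)},\dots,\mathbf u^{(N_t)}$, $\mathbf k_i^{(n)}$ ($n=1,\dots,N_t$, $i=1,\dots,s$) be a time-periodic solution of the fully discrete equations $$\mathbf u^{(n)}=\mathbf u^{(n-1)}+\sum_{i=1}^s b_i\mathbf k_i^{(n)},\qquad \mathbb M\mathbf k_i^{(n)}=\Delta t_n\,\mathbf r\big(\mathbf u_i^{(n)},\boldsymbol\mu,t_{n-1}+c_i\Delta t_n\big),\qquad \mathbf u_i^{(n)}=\mathbf u^{(n-1)}+\sum_{j=1}^i a_{ij}\mathbf k_j^{(n)},$$ with $\mathbf u^{(0)}=\mathbf u^{(N_t)}$. Let $F$ be a continuously differentiable function of $(\mathbf u^{(0)},\dots,\mathbf u^{(N_t)},\mathbf k_1^{(1)},\dots,\mathbf k_s^{(N_t)},\boldsymbol\mu)$.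 Assume the Jacobian $\frac{\partial\mathbf u^{(N_t)}}{\partial\mathbf u_0}(\mathbf u^{(0)};\boldsymbol\mu)-\mathbf I$ of the time-periodicity residual is non-singular at this periodic solution. Then the linear system (a two-point boundary value problem) for the unknowns $\boldsymbol\lambda^{(0)},\dots,\boldsymbol\lambda^{(N_t)},\boldsymbol\kappa_1^{(1)},\dots,\boldsymbol\kappa_s^{(N_t)}\in\mathbb R^{N_{\mathbf u}}$, $$\boldsymbol\lambda^{(N_t)}=\boldsymbol\lambda^{(0)}+\frac{\partial F}{\partial\mathbf u^{(N_t)}}^T,$$ $$\boldsymbol\lambda^{(n-1)}=\boldsymbol\lambda^{(n)}+\frac{\partial F}{\partial\mathbf u^{(n-1)}}^T+\sum_{i=1}^s\Delta t_n\frac{\partial\mathbf r}{\partial\mathbf u}\big(\mathbf u_i^{(n)},\boldsymbol\mu,t_{n-1}+c_i\Delta t_n\big)^T\boldsymbol\kappa_i^{(n)},$$ $$\mathbb M^T\boldsymbol\kappa_i^{(n)}=\frac{\partial F}{\partial\mathbf k_i^{(n)}}^T+b_i\boldsymbol\lambda^{(n)}+\sum_{j=i}^s a_{ji}\Delta t_n\frac{\partial\mathbf r}{\partial\mathbf u}\big(\mathbf u_j^{(n)},\boldsymbol\mu,t_{n-1}+c_j\Delta t_n\big)^T\boldsymbol\kappa_j^{(n)},$$ for $n=1,\dots,N_t$, $i=1,\dots,s$ (all derivatives of $F$ evaluated at the periodic solution), has a solution, and this solution is unique.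
   Context: For $\mathbf u_0\in\mathbb R^{N_{\mathbf u}}$, $\mathbf u^{(N_t)}(\mathbf u_0;\boldsymbol\mu)$ denotes the state at step $N_t$ obtained by evolving the DIRK recursion above from the initial condition $\mathbf u^{(0)}=\mathbf u_0$ (without imposing periodicity), and $\frac{\partial\mathbf u^{(N_t)}}{\partial\mathbf u_0}$ is its Jacobian with respect to $\mathbf u_0$. It is assumed throughout that the DIRK stage equations and their linearizations are uniquely solvable along the periodic solution, i.e. the matrices $\mathbb M-a_{ii}\Delta t_n\frac{\partial\mathbf r}{\partial\mathbf u}(\mathbf u_i^{(n)},\boldsymbol\mu,t_{n-1}+c_i\Delta t_n)$ are non-singular for all $n,i$, so that the map $\mathbf u_0\mapsto\mathbf u^{(N_t)}(\mathbf u_0;\boldsymbol\mu)$ is differentiable near $\mathbf u^{(0)}$. *)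

theory Defs
  imports "HOL-Analysis.Analysis"
begin

definition tgrid :: "(nat \<Rightarrow> real) \<Rightarrow> nat \<Rightarrow> real" where
  "tgrid dt n = (\<Sum>m = 1..n. dt m)"

definition stage :: "(nat \<Rightarrow> nat \<Rightarrow> real) \<Rightarrow> (nat \<Rightarrow> real^'n) \<Rightarrow> (nat \<Rightarrow> nat \<Rightarrow> real^'n)
    \<Rightarrow> nat \<Rightarrow> nat \<Rightarrow> real^'n" where
  "stage a u k n i = u (n - 1) + (\<Sum>j = 1..i. a i j *\<^sub>R k n j)"

definition dirk_eqs :: "real^'n^'n \<Rightarrow> (real^'n \<Rightarrow> real^'m \<Rightarrow> real \<Rightarrow> real^'n)
    \<Rightarrow> (nat \<Rightarrow> nat \<Rightarrow> real) \<Rightarrow> (nat \<Rightarrow> real) \<Rightarrow> (nat \<Rightarrow> real) \<Rightarrow> (nat \<Rightarrow> real)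
    \<Rightarrow> real^'m \<Rightarrow> nat \<Rightarrow> nat \<Rightarrow> (nat \<Rightarrow> real^'n) \<Rightarrow> (nat \<Rightarrow> nat \<Rightarrow> real^'n) \<Rightarrow> bool" where
  "dirk_eqs M r a b c dt mu Nt s u k \<longleftrightarrow>
     (\<forall>n \<in> {1..Nt}.
        u n = u (n - 1) + (\<Sum>i = 1..s. b i *\<^sub>R k n i) \<and>
        (\<forall>i \<in> {1..s}. M *v k n i =
            dt n *\<^sub>R r (stage a u k n i) mu (tgrid dt (n - 1) + c i * dt n)))"

definition bnorm :: "nat \<Rightarrow> nat \<Rightarrow> (nat \<Rightarrow> real^'n) \<Rightarrow> (nat \<Rightarrow> nat \<Rightarrow> real^'n) \<Rightarrow> real^'m \<Rightarrow> real" where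
  "bnorm Nt s hu hk hm = (\<Sum>n\<le>Nt. norm (hu n)) + (\<Sum>n = 1..Nt. \<Sum>i = 1..s. norm (hk n i)) + norm hm"

definition blin :: "nat \<Rightarrow> nat \<Rightarrow> (nat \<Rightarrow> real^'n) \<Rightarrow> (nat \<Rightarrow> nat \<Rightarrow> real^'n) \<Rightarrow> real^'m
    \<Rightarrow> (nat \<Rightarrow> real^'n) \<Rightarrow> (nat \<Rightarrow> nat \<Rightarrow> real^'n) \<Rightarrow> real^'m \<Rightarrow> real" where
  "blin Nt s gu gk gm hu hk hm =
     (\<Sum>n\<le>Nt. gu n \<bullet> hu n) + (\<Sum>n = 1..Nt. \<Sum>i = 1..s. gk n i \<bullet> hk n i) + gm \<bullet> hm"

text \<open>F is a continuously differentiable function of (u^(0),...,u^(Nt), k_1^(1),...,k_s^(Nt), mu)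
  with partial gradients Gu, Gk, Gm (Frechet differentiability and continuity of the
  gradient w.r.t. the norm bnorm of the finitely many relevant arguments; in particular F
  does not depend on the remaining entries of its function-valued arguments).\<close>
definition F_C1 :: "nat \<Rightarrow> nat
    \<Rightarrow> ((nat \<Rightarrow> real^'n) \<Rightarrow> (nat \<Rightarrow> nat \<Rightarrow> real^'n) \<Rightarrow> real^'m \<Rightarrow> real)
    \<Rightarrow> ((nat \<Rightarrow> real^'n) \<Rightarrow> (nat \<Rightarrow> nat \<Rightarrow> real^'n) \<Rightarrow> real^'m \<Rightarrow> nat \<Rightarrow> real^'n)
    \<Rightarrow> ((nat \<Rightarrow> real^'n) \<Rightarrow> (nat \<Rightarrow> nat \<Rightarrow> real^'n) \<Rightarrow> real^'m \<Rightarrow> nat \<Rightarrow> nat \<Rightarrow> real^'n)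
    \<Rightarrow> ((nat \<Rightarrow> real^'n) \<Rightarrow> (nat \<Rightarrow> nat \<Rightarrow> real^'n) \<Rightarrow> real^'m \<Rightarrow> real^'m) \<Rightarrow> bool" where
  "F_C1 Nt s F Gu Gk Gm \<longleftrightarrow>
     (\<forall>x y z.
        (\<forall>e>0. \<exists>d>0. \<forall>hu hk hm. bnorm Nt s hu hk hm < d \<longrightarrow>
            \<bar>F (\<lambda>n. x n + hu n) (\<lambda>n i. y n i + hk n i) (z + hm) - F x y z
               - blin Nt s (Gu x y z) (Gk x y z) (Gm x y z) hu hk hm\<bar>
            \<le> e * bnorm Nt s hu hk hm) \<and>
        (\<forall>e>0. \<exists>d>0. \<forall>hu hk hm. bnorm Nt s hu hk hm < d \<longrightarrow>
            bnorm Nt s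
              (\<lambda>n. Gu (\<lambda>n. x n + hu n) (\<lambda>n i. y n i + hk n i) (z + hm) n - Gu x y z n)
              (\<lambda>n i. Gk (\<lambda>n. x n + hu n) (\<lambda>n i. y n i + hk n i) (z + hm) n i - Gk x y z n i)
              (Gm (\<lambda>n. x n + hu n) (\<lambda>n i. y n i + hk n i) (z + hm) - Gm x y z) < e))"

definition adjoint_sys :: "real^'n^'n \<Rightarrow> (real^'n \<Rightarrow> real^'m \<Rightarrow> real \<Rightarrow> real^'n^'n)
    \<Rightarrow> (nat \<Rightarrow> nat \<Rightarrow> real) \<Rightarrow> (nat \<Rightarrow> real) \<Rightarrow> (nat \<Rightarrow> real) \<Rightarrow> (nat \<Rightarrow> real)
    \<Rightarrow> real^'m \<Rightarrow> nat \<Rightarrow> nat \<Rightarrow> (nat \<Rightarrow> real^'n) \<Rightarrow> (nat \<Rightarrow> nat \<Rightarrow> real^'n)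
    \<Rightarrow> (nat \<Rightarrow> real^'n) \<Rightarrow> (nat \<Rightarrow> nat \<Rightarrow> real^'n)
    \<Rightarrow> (nat \<Rightarrow> real^'n) \<Rightarrow> (nat \<Rightarrow> nat \<Rightarrow> real^'n) \<Rightarrow> bool" where
  "adjoint_sys M Jr a b c dt mu Nt s u k gu gk lam kap \<longleftrightarrow>
     lam Nt = lam 0 + gu Nt \<and>
     (\<forall>n \<in> {1..Nt}.
        lam (n - 1) = lam n + gu (n - 1) +
          (\<Sum>i = 1..s. dt n *\<^sub>R
             (transpose (Jr (stage a u k n i) mu (tgrid dt (n - 1) + c i * dt n)) *v kap n i)) \<and>
        (\<forall>i \<in> {1..s}.
           transpose M *v kap n i = gk n i + b i *\<^sub>R lam n +
             (\<Sum>j = i..s. (a j i * dt n) *\<^sub>R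
                (transpose (Jr (stage a u k n j) mu (tgrid dt (n - 1) + c j * dt n)) *v kap n j))))"

end

theory Submission
  imports Defs
begin

text \<open>Implicit differentiation of the stage equations, possible because the stage matrices are
  non-singular, shows that the flow map \<open>v \<mapsto> Us v Nt\<close> is differentiable at \<open>u 0\<close> and that its
  derivative \<open>J\<close> is the propagator of the linearized DIRK recursion. For a prescribed final value
  \<open>lam Nt\<close> the adjoint recursion is solved uniquely backwards in time, each step being a block
  upper-triangular system whose diagonal blocks are the transposed stage matrices. Pairing the
  adjoint recursion with the linearized one (summation by parts) shows that \<open>lam 0\<close> depends
  affinely on \<open>lam Nt\<close>, with linear part \<open>transpose J\<close>. The periodicity condition
  \<open>lam Nt = lam 0 + Gu u k mu Nt\<close> thus becomes a linear equation for \<open>lam Nt\<close> with matrix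
  \<open>transpose J - mat 1\<close>, which has exactly one solution.\<close>

section \<open>Differentiating an implicitly defined stage\<close>

lemma has_derivative_imp_eventually_norm_le:
  assumes "(f has_derivative f') (at x0)"
  obtains K where "K > 0" "\<forall>\<^sub>F v in at x0. norm (f v - f x0) \<le> K * norm (v - x0)"
proof -
  obtain K where K: "K > 0" "\<And>h. norm (f' h) \<le> norm h * K"
    using assms has_derivative_bounded_linear bounded_linear.pos_bounded by blast
  have "\<forall>\<^sub>F v in at x0. norm (f v - f x0 - f' (v - x0)) \<le> 1 * norm (v - x0)"
    using assms zero_less_one unfolding has_derivative_within_alt2 by blast
  then have "\<forall>\<^sub>F v in at x0. norm (f v - f x0) \<le> (K + 1) * norm (v - x0)"
  proof (rule eventually_mono)
    fix v assume "norm (f v - f x0 - f' (v - x0)) \<le> 1 * norm (v - x0)"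
    then show "norm (f v - f x0) \<le> (K + 1) * norm (v - x0)"
      using norm_triangle_ineq[of "f v - f x0 - f' (v - x0)" "f' (v - x0)"] K(2)[of "v - x0"]
      by (simp add: algebra_simps)
  qed
  with K(1) show thesis by (intro that[of "K + 1"]) auto
qed

lemma has_derivative_zeroI:
  assumes "g x0 = 0" and "\<And>e. e > 0 \<Longrightarrow> \<forall>\<^sub>F v in at x0. norm (g v) \<le> e * norm (v - x0)"
  shows "(g has_derivative (\<lambda>h. 0)) (at x0)"
  using assms unfolding has_derivative_within_alt2 by simp

lemma has_derivative_of_implicit_linear_eq:
  fixes Phi :: "'a::real_normed_vector \<Rightarrow> 'b::real_normed_vector"
    and psi :: "'a \<Rightarrow> 'c::real_normed_vector" and eps :: "'a \<Rightarrow> 'd::real_normed_vector"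
  assumes psi: "(psi has_derivative psi') (at x0)" "psi x0 = 0" and Phi0: "Phi x0 = 0"
    and P: "bounded_linear P" and Q: "bounded_linear Q"
    and eq: "\<forall>\<^sub>F v in at x0. Phi v = P (psi v) + Q (eps v)"
    and eps: "\<And>\<eta>. \<eta> > 0 \<Longrightarrow> \<forall>\<^sub>F v in at x0. norm (eps v) \<le> \<eta> * (norm (psi v) + norm (Phi v))"
  shows "(Phi has_derivative (\<lambda>h. P (psi' h))) (at x0)"
proof -
  obtain KP where KP: "KP > 0" "\<And>x. norm (P x) \<le> norm x * KP"
    using P bounded_linear.pos_bounded by blast
  obtain KQ where KQ: "KQ > 0" "\<And>x. norm (Q x) \<le> norm x * KQ"
    using Q bounded_linear.pos_bounded by blast
  obtain K where K: "K > 0" "\<forall>\<^sub>F v in at x0. norm (psi v) \<le> K * norm (v - x0)"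
    using has_derivative_imp_eventually_norm_le[OF psi(1)] psi(2) by auto
  \<comment> \<open>Choosing \<open>\<eta> = 1 / (2 KQ)\<close> lets the \<open>Phi\<close>-term on the right be absorbed into the left.\<close>
  have "\<forall>\<^sub>F v in at x0. norm (eps v) \<le> 1 / (2 * KQ) * (norm (psi v) + norm (Phi v))"
    using eps[of "1 / (2 * KQ)"] KQ(1) by simp
  with eq have Phi_le: "\<forall>\<^sub>F v in at x0. norm (Phi v) \<le> (2 * KP + 1) * norm (psi v)"
  proof eventually_elim
    case (elim v)
    have "norm (Phi v) \<le> norm (psi v) * KP + norm (eps v) * KQ"
      using elim(1) norm_triangle_ineq[of "P (psi v)" "Q (eps v)"] KP(2) KQ(2) by (smt (verit))
    also have "norm (eps v) * KQ \<le> (norm (psi v) + norm (Phi v)) / 2"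
      using elim(2) KQ(1) by (simp add: field_simps)
    finally show ?case by (simp add: field_simps)
  qed
  have "((\<lambda>v. Phi v - P (psi v)) has_derivative (\<lambda>h. 0)) (at x0)"
  proof (rule has_derivative_zeroI)
    show "Phi x0 - P (psi x0) = 0"
      using Phi0 psi(2) P by (simp add: linear_simps)
    fix e :: real assume "e > 0"
    define \<eta> where "\<eta> = e / (KQ * (2 * KP + 2) * K)"
    have \<eta>: "\<eta> > 0" using \<open>e > 0\<close> KP KQ K by (simp add: \<eta>_def)
    show "\<forall>\<^sub>F v in at x0. norm (Phi v - P (psi v)) \<le> e * norm (v - x0)"
      using eq eps[OF \<eta>] Phi_le K(2)
    proof eventually_elim
      case (elim v)
      have "\<eta> * (norm (psi v) + norm (Phi v)) \<le> \<eta> * ((2 * KP + 2) * norm (psi v))"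
        using elim(3) \<eta> by (intro mult_left_mono) (auto simp: algebra_simps)
      with elim(2) have eps_le: "norm (eps v) \<le> \<eta> * ((2 * KP + 2) * norm (psi v))"
        by linarith
      have "norm (Phi v - P (psi v)) \<le> norm (eps v) * KQ"
        using elim(1) KQ(2) by simp
      also have "\<dots> \<le> \<eta> * ((2 * KP + 2) * norm (psi v)) * KQ"
        using eps_le KQ(1) by (intro mult_right_mono) auto
      also have "\<dots> \<le> \<eta> * ((2 * KP + 2) * (K * norm (v - x0))) * KQ"
        using elim(4) KP(1) KQ(1) \<eta> by (intro mult_right_mono mult_left_mono) auto
      also have "\<dots> = \<eta> * (KQ * (2 * KP + 2) * K) * norm (v - x0)"
        by (simp add: algebra_simps)
      also have "\<dots> = e * norm (v - x0)"
        using KP(1) KQ(1) K(1) by (simp add: \<eta>_def)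
      finally show ?case .
    qed
  qed
  then have "((\<lambda>v. P (psi v) + (Phi v - P (psi v))) has_derivative (\<lambda>h. P (psi' h) + 0)) (at x0)"
    by (intro has_derivative_add bounded_linear.has_derivative[OF P psi(1)])
  then show ?thesis by simp
qed

lemma implicit_stage_has_derivative:
  fixes f g :: "'a::real_normed_vector \<Rightarrow> real^'n" and R :: "real^'n \<Rightarrow> real^'n"
    and A M :: "real^'n^'n"
  assumes f: "continuous (at x0) f" and g: "(g has_derivative g') (at x0)"
    and R: "(R has_derivative (\<lambda>h. A *v h)) (at (g x0 + \<beta> *\<^sub>R f x0))"
    and eq: "\<forall>\<^sub>F v in nhds x0. M *v f v = \<alpha> *\<^sub>R R (g v + \<beta> *\<^sub>R f v)"
    and inv: "invertible (M - (\<beta> * \<alpha>) *\<^sub>R A)"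
  shows "\<exists>L. (f has_derivative L) (at x0) \<and> (\<forall>h. M *v L h = \<alpha> *\<^sub>R (A *v (g' h + \<beta> *\<^sub>R L h)))"
proof -
  define B where "B = M - (\<beta> * \<alpha>) *\<^sub>R A"
  obtain Bi where Bi: "B ** Bi = mat 1" "Bi ** B = mat 1"
    using inv unfolding B_def invertible_def by blast
  define p where "p v = g v + \<beta> *\<^sub>R f v" for v
  define Phi where "Phi v = f v - f x0" for v
  define psi where "psi v = g v - g x0" for v
  define eps where "eps v = R (p v) - R (p x0) - A *v (p v - p x0)" for v
  define P where "P h = Bi *v (\<alpha> *\<^sub>R (A *v h))" for h
  define Q where "Q e = Bi *v (\<alpha> *\<^sub>R e)" for e
  have P: "bounded_linear P" and Q: "bounded_linear Q"
    unfolding P_def Q_def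
    by (intro bounded_linear_compose[OF matrix_vector_mul_bounded_linear]
        bounded_linear_compose[OF bounded_linear_scaleR_right] bounded_linear_scaleR_right
        matrix_vector_mul_bounded_linear)+
  have p_diff: "p v - p x0 = psi v + \<beta> *\<^sub>R Phi v" for v
    by (simp add: p_def psi_def Phi_def algebra_simps)
  have eq_at: "\<forall>\<^sub>F v in at x0. M *v f v = \<alpha> *\<^sub>R R (p v)" and eq0: "M *v f x0 = \<alpha> *\<^sub>R R (p x0)"
    using eq unfolding eventually_nhds_conv_at by (simp_all add: p_def)
  have split: "\<forall>\<^sub>F v in at x0. Phi v = P (psi v) + Q (eps v)"
    using eq_at
  proof (rule eventually_mono)
    fix v assume "M *v f v = \<alpha> *\<^sub>R R (p v)"
    then have "M *v Phi v = \<alpha> *\<^sub>R (R (p v) - R (p x0))"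
      using eq0 by (simp add: Phi_def algebra_simps)
    also have "R (p v) - R (p x0) = A *v (psi v + \<beta> *\<^sub>R Phi v) + eps v"
      by (simp add: eps_def p_diff)
    finally have "B *v Phi v = \<alpha> *\<^sub>R (A *v psi v) + \<alpha> *\<^sub>R eps v"
      by (simp add: B_def algebra_simps scaleR_matrix_vector_assoc)
    then have "Bi *v (B *v Phi v) = P (psi v) + Q (eps v)"
      unfolding P_def Q_def by (simp add: algebra_simps)
    then show "Phi v = P (psi v) + Q (eps v)"
      by (simp add: matrix_vector_mul_assoc Bi)
  qed
  have small: "\<forall>\<^sub>F v in at x0. norm (eps v) \<le> \<eta> * (norm (psi v) + norm (Phi v))"
    if "\<eta> > 0" for \<eta>
  proof -
    define \<eta>' where "\<eta>' = \<eta> / (1 + \<bar>\<beta>\<bar>)"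
    have \<eta>': "\<eta>' > 0" using that by (simp add: \<eta>'_def add_pos_nonneg)
    obtain d where d: "d > 0"
      "\<And>y. norm (y - p x0) < d \<Longrightarrow> norm (R y - R (p x0) - A *v (y - p x0)) \<le> \<eta>' * norm (y - p x0)"
      using R \<eta>' unfolding has_derivative_at_alt p_def by blast
    have "continuous (at x0) p"
      unfolding p_def using has_derivative_continuous[OF g] f by (intro continuous_intros)
    then have "\<forall>\<^sub>F v in at x0. dist (p v) (p x0) < d"
      using d(1) unfolding continuous_at tendsto_iff by blast
    then show ?thesis
    proof (rule eventually_mono)
      fix v assume "dist (p v) (p x0) < d"
      then have "norm (eps v) \<le> \<eta>' * norm (psi v + \<beta> *\<^sub>R Phi v)"
        using d(2)[of "p v"] by (simp add: eps_def dist_norm p_diff)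
      also have "\<dots> \<le> \<eta>' * ((1 + \<bar>\<beta>\<bar>) * (norm (psi v) + norm (Phi v)))"
      proof (rule mult_left_mono)
        have "norm (psi v + \<beta> *\<^sub>R Phi v) \<le> norm (psi v) + \<bar>\<beta>\<bar> * norm (Phi v)"
          using norm_triangle_ineq[of "psi v" "\<beta> *\<^sub>R Phi v"] by simp
        also have "\<dots> \<le> (1 + \<bar>\<beta>\<bar>) * (norm (psi v) + norm (Phi v))"
          by (simp add: algebra_simps)
        finally show "norm (psi v + \<beta> *\<^sub>R Phi v) \<le> (1 + \<bar>\<beta>\<bar>) * (norm (psi v) + norm (Phi v))" .
      qed (use \<eta>' in simp)
      also have "\<dots> = \<eta> * (norm (psi v) + norm (Phi v))"
        by (simp add: \<eta>'_def add_pos_nonneg)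
      finally show "norm (eps v) \<le> \<eta> * (norm (psi v) + norm (Phi v))" .
    qed
  qed
  have "(psi has_derivative g') (at x0)"
    unfolding psi_def using g by (auto intro: derivative_eq_intros)
  then have "(Phi has_derivative (\<lambda>h. P (g' h))) (at x0)"
    by (rule has_derivative_of_implicit_linear_eq[OF _ _ _ P Q split small])
      (simp_all add: psi_def Phi_def)
  then have L: "(f has_derivative (\<lambda>h. P (g' h))) (at x0)"
    unfolding Phi_def using has_derivative_add_const[of _ _ _ "f x0"] by fastforce
  have "B *v P h = \<alpha> *\<^sub>R (A *v h)" for h
    by (simp add: P_def matrix_vector_mul_assoc Bi)
  then have "M *v P (g' h) = \<alpha> *\<^sub>R (A *v (g' h + \<beta> *\<^sub>R P (g' h)))" for h
    by (simp add: B_def algebra_simps scaleR_matrix_vector_assoc)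
  with L show ?thesis by blast
qed

declare transpose_matrix_vector [simp del]

lemma invertible_imp_ex1_solution:
  fixes B :: "real^'n^'n"
  shows "invertible B \<Longrightarrow> \<exists>!x. B *v x = y"
  by (simp add: invertible_eq_bij bij_iff)

lemma upper_triangular_row_iff:
  fixes B :: "real^'n^'n" and C :: "nat \<Rightarrow> real^'n^'n"
  assumes "i \<le> s"
  shows "B *v K i = y + (\<Sum>j = i..s. cc j *\<^sub>R (C j *v K j)) \<longleftrightarrow>
    (B - cc i *\<^sub>R C i) *v K i = y + (\<Sum>j = Suc i..s. cc j *\<^sub>R (C j *v K j))"
  using assms by (simp add: sum.atLeast_Suc_atMost algebra_simps scaleR_matrix_vector_assoc)

lemma upper_triangular_system_solvable:
  fixes B :: "real^'n^'n" and C :: "nat \<Rightarrow> real^'n^'n"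
  assumes inv: "\<And>i. i \<in> {1..s} \<Longrightarrow> invertible (B - cc i i *\<^sub>R C i)"
  shows "\<exists>K. \<forall>i \<in> {1..s}. B *v K i = y i + (\<Sum>j = i..s. cc j i *\<^sub>R (C j *v K j))"
proof -
  have "\<exists>K. \<forall>i \<in> {l..s}. B *v K i = y i + (\<Sum>j = i..s. cc j i *\<^sub>R (C j *v K j))"
    if "1 \<le> l" "l \<le> Suc s" for l
    using that(2)
  proof (induction rule: inc_induct)
    case base
    show ?case by simp
  next
    case (step n)
    then obtain K where K: "\<forall>i \<in> {Suc n..s}. B *v K i = y i + (\<Sum>j = i..s. cc j i *\<^sub>R (C j *v K j))"
      by blast
    have n: "n \<in> {1..s}" using step.hyps that(1) by simp
    obtain x where x: "(B - cc n n *\<^sub>R C n) *v x = y n + (\<Sum>j = Suc n..s. cc j n *\<^sub>R (C j *v K j))"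
      using invertible_imp_ex1_solution[OF inv[OF n]] by blast
    have same_tail: "(\<Sum>j = m..s. cc j i *\<^sub>R (C j *v (K(n := x)) j)) = (\<Sum>j = m..s. cc j i *\<^sub>R (C j *v K j))"
      if "n < m" for m i
      using that by (intro sum.cong) auto
    have "B *v (K(n := x)) i = y i + (\<Sum>j = i..s. cc j i *\<^sub>R (C j *v (K(n := x)) j))"
      if i: "i \<in> {n..s}" for i
    proof (cases "i = n")
      case True
      have "(B - cc n n *\<^sub>R C n) *v (K(n := x)) n
          = y n + (\<Sum>j = Suc n..s. cc j n *\<^sub>R (C j *v (K(n := x)) j))"
        using x same_tail[of "Suc n" n] by simp
      then show ?thesis
        using True n
          upper_triangular_row_iff[where i=n and s=s and y="y n" and K="K(n := x)" and cc="\<lambda>j. cc j n"]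
        by simp
    next
      case False
      then show ?thesis
        using i K same_tail[of i i] by simp
    qed
    then show ?case by blast
  qed
  from this[of 1] show ?thesis by simp
qed

lemma upper_triangular_system_unique:
  fixes B :: "real^'n^'n" and C :: "nat \<Rightarrow> real^'n^'n"
  assumes inv: "\<And>i. i \<in> {1..s} \<Longrightarrow> invertible (B - cc i i *\<^sub>R C i)"
    and K: "\<forall>i \<in> {1..s}. B *v K i = y i + (\<Sum>j = i..s. cc j i *\<^sub>R (C j *v K j))"
    and K': "\<forall>i \<in> {1..s}. B *v K' i = y i + (\<Sum>j = i..s. cc j i *\<^sub>R (C j *v K' j))"
  shows "\<forall>i \<in> {1..s}. K i = K' i"
proof -
  have "\<forall>i \<in> {l..s}. K i = K' i" if "1 \<le> l" "l \<le> Suc s" for l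
    using that(2)
  proof (induction rule: inc_induct)
    case base
    show ?case by simp
  next
    case (step n)
    have n: "n \<in> {1..s}" using step.hyps that(1) by simp
    have row: "(B - cc n n *\<^sub>R C n) *v L n = y n + (\<Sum>j = Suc n..s. cc j n *\<^sub>R (C j *v L j))"
      if "\<forall>i \<in> {1..s}. B *v L i = y i + (\<Sum>j = i..s. cc j i *\<^sub>R (C j *v L j))" for L
      using bspec[OF that n] n
        upper_triangular_row_iff[where i=n and s=s and y="y n" and K=L and cc="\<lambda>j. cc j n"]
      by simp
    have "(\<Sum>j = Suc n..s. cc j n *\<^sub>R (C j *v K j)) = (\<Sum>j = Suc n..s. cc j n *\<^sub>R (C j *v K' j))"
      using step.IH by (intro sum.cong) auto
    then have "(B - cc n n *\<^sub>R C n) *v K n = (B - cc n n *\<^sub>R C n) *v K' n"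
      using row[OF K] row[OF K'] by simp
    then have Kn: "K n = K' n"
      using invertible_imp_ex1_solution[OF inv[OF n]] by blast
    show ?case
    proof
      fix i assume "i \<in> {n..s}"
      then consider "i = n" | "i \<in> {Suc n..s}" by fastforce
      then show "K i = K' i" using Kn step.IH by cases auto
    qed
  qed
  from this[of 1] show ?thesis by simp
qed

lemma invertible_transpose_diff_scaleR:
  fixes M A :: "real^'n^'n"
  assumes "invertible (M - c *\<^sub>R A)"
  shows "invertible (transpose M - c *\<^sub>R transpose A)"
proof -
  have "transpose (M - c *\<^sub>R A) = transpose M - c *\<^sub>R transpose A"
    by (simp add: transpose_def vec_eq_iff)
  with transpose_invertible[OF assms] show ?thesis by simp
qed

lemma sum_upper_triangle_swap:
  fixes s :: nat
  shows "(\<Sum>i = 1..s. \<Sum>j = i..s. G i j) = (\<Sum>j = 1..s. \<Sum>i = 1..j. G i j :: 'a::comm_monoid_add)"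
  by (induction s) (auto simp: sum.distrib)

lemma inner_transpose_matrix_vector:
  fixes A :: "real^'n^'m"
  shows "(transpose A *v x) \<bullet> y = x \<bullet> (A *v y)"
  by (simp add: transpose_matrix_vector dot_lmul_matrix)

lemma invertible_imp_ex1_fixpoint_transpose:
  fixes J :: "real^'n^'n"
  assumes "invertible (J - mat 1)"
  shows "\<exists>!x. x = transpose J *v x + y"
proof -
  have "invertible (transpose J - 1 *\<^sub>R transpose (mat 1 :: real^'n^'n))"
    using invertible_transpose_diff_scaleR[of J 1 "mat 1"] assms by simp
  then have "\<exists>!x. (transpose J - mat 1) *v x = - y"
    by (simp add: invertible_imp_ex1_solution)
  moreover have "(transpose J - mat 1) *v x = - y \<longleftrightarrow> x = transpose J *v x + y" for x
    by (auto simp: algebra_simps)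
  ultimately show ?thesis by simp
qed

section \<open>The linearized DIRK recursion\<close>

definition stage_jacobian :: "(real^'n \<Rightarrow> real^'m \<Rightarrow> real \<Rightarrow> real^'n^'n) \<Rightarrow> (nat \<Rightarrow> nat \<Rightarrow> real)
    \<Rightarrow> (nat \<Rightarrow> real) \<Rightarrow> (nat \<Rightarrow> real) \<Rightarrow> real^'m \<Rightarrow> (nat \<Rightarrow> real^'n) \<Rightarrow> (nat \<Rightarrow> nat \<Rightarrow> real^'n)
    \<Rightarrow> nat \<Rightarrow> nat \<Rightarrow> real^'n^'n" where
  "stage_jacobian Jr a c dt mu u k n i = Jr (stage a u k n i) mu (tgrid dt (n - 1) + c i * dt n)"

definition linearized_dirk_eqs :: "real^'n^'n \<Rightarrow> (nat \<Rightarrow> nat \<Rightarrow> real^'n^'n) \<Rightarrow> (nat \<Rightarrow> nat \<Rightarrow> real)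
    \<Rightarrow> (nat \<Rightarrow> real) \<Rightarrow> (nat \<Rightarrow> real) \<Rightarrow> nat \<Rightarrow> nat \<Rightarrow> (nat \<Rightarrow> real^'n) \<Rightarrow> (nat \<Rightarrow> nat \<Rightarrow> real^'n)
    \<Rightarrow> bool" where
  "linearized_dirk_eqs M A a b dt Nt s du dk \<longleftrightarrow>
     (\<forall>n \<in> {1..Nt}.
        du n = du (n - 1) + (\<Sum>i = 1..s. b i *\<^sub>R dk n i) \<and>
        (\<forall>i \<in> {1..s}. M *v dk n i = dt n *\<^sub>R (A n i *v stage a du dk n i)))"

locale dirk_flow =
  fixes M :: "real^'n^'n"
    and r :: "real^'n \<Rightarrow> real^'m \<Rightarrow> real \<Rightarrow> real^'n"
    and Jr :: "real^'n \<Rightarrow> real^'m \<Rightarrow> real \<Rightarrow> real^'n^'n"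
    and a :: "nat \<Rightarrow> nat \<Rightarrow> real" and b c dt :: "nat \<Rightarrow> real"
    and Nt s :: nat and mu :: "real^'m"
    and u :: "nat \<Rightarrow> real^'n" and k :: "nat \<Rightarrow> nat \<Rightarrow> real^'n"
    and V :: "(real^'n) set"
    and Us :: "real^'n \<Rightarrow> nat \<Rightarrow> real^'n"
    and Ks :: "real^'n \<Rightarrow> nat \<Rightarrow> nat \<Rightarrow> real^'n"
  assumes Jr: "\<And>v m t. ((\<lambda>w. r w m t) has_derivative (\<lambda>h. Jr v m t *v h)) (at v)"
    and sol: "dirk_eqs M r a b c dt mu Nt s u k"
    and stage_nonsing: "\<And>n i. n \<in> {1..Nt} \<Longrightarrow> i \<in> {1..s} \<Longrightarrow>
          invertible (M - (a i i * dt n) *\<^sub>R stage_jacobian Jr a c dt mu u k n i)"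
    and V_open: "open V" and V_mem: "u 0 \<in> V"
    and flow_init: "\<And>v. v \<in> V \<Longrightarrow> Us v 0 = v"
    and flow_eqs: "\<And>v. v \<in> V \<Longrightarrow> dirk_eqs M r a b c dt mu Nt s (Us v) (Ks v)"
    and flow_branch: "\<And>n i. n \<in> {1..Nt} \<Longrightarrow> i \<in> {1..s} \<Longrightarrow>
          Ks (u 0) n i = k n i \<and> continuous (at (u 0)) (\<lambda>v. Ks v n i)"
begin

abbreviation DU :: "nat \<Rightarrow> real^'n \<Rightarrow> real^'n" where
  "DU n \<equiv> frechet_derivative (\<lambda>v. Us v n) (at (u 0))"

abbreviation DK :: "nat \<Rightarrow> nat \<Rightarrow> real^'n \<Rightarrow> real^'n" where
  "DK n i \<equiv> frechet_derivative (\<lambda>v. Ks v n i) (at (u 0))"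

lemma flow_at_u0: "n \<le> Nt \<Longrightarrow> Us (u 0) n = u n"
proof (induction n)
  case 0
  show ?case using flow_init V_mem by simp
next
  case (Suc n)
  then have n: "Suc n \<in> {1..Nt}" by simp
  have "Us (u 0) (Suc n) = Us (u 0) n + (\<Sum>i = 1..s. b i *\<^sub>R Ks (u 0) (Suc n) i)"
    using flow_eqs[OF V_mem] n unfolding dirk_eqs_def by auto
  also have "\<dots> = u n + (\<Sum>i = 1..s. b i *\<^sub>R k (Suc n) i)"
    using Suc flow_branch[OF n] by (auto intro!: sum.cong)
  also have "\<dots> = u (Suc n)"
    using sol n unfolding dirk_eqs_def by auto
  finally show ?case .
qed

lemma stage_has_derivative:
  assumes n: "n \<in> {1..Nt}" and i: "i \<in> {1..s}"
    and prev: "(\<lambda>v. Us v (n - 1)) differentiable (at (u 0))"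
    and earlier: "\<And>j. j \<in> {1..<i} \<Longrightarrow> (\<lambda>v. Ks v n j) differentiable (at (u 0))"
  shows "(\<lambda>v. Ks v n i) differentiable (at (u 0))"
    and "M *v DK n i h = dt n *\<^sub>R (stage_jacobian Jr a c dt mu u k n i *v
           stage a (\<lambda>m. DU m h) (\<lambda>m l. DK m l h) n i)"
proof -
  define t where "t = tgrid dt (n - 1) + c i * dt n"
  define \<beta> where "\<beta> = a i i"
  define g where "g v = Us v (n - 1) + (\<Sum>l = 1..<i. a i l *\<^sub>R Ks v n l)" for v
  define g' where "g' h = DU (n - 1) h + (\<Sum>l = 1..<i. a i l *\<^sub>R DK n l h)" for h
  have stage_split: "stage a U K n i = U (n - 1) + (\<Sum>l = 1..<i. a i l *\<^sub>R K n l) + \<beta> *\<^sub>R K n i" for U K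
    using i by (simp add: stage_def \<beta>_def atLeastLessThanSuc_atLeastAtMost[symmetric] add.assoc)
  have dg: "(g has_derivative g') (at (u 0))"
    unfolding g_def g'_def using prev earlier
    by (intro has_derivative_add has_derivative_sum has_derivative_scaleR_right)
      (auto simp: frechet_derivative_works)
  have "g (u 0) + \<beta> *\<^sub>R Ks (u 0) n i = stage a u k n i"
    using flow_at_u0[of "n - 1"] flow_branch[OF n] n i
    by (auto simp: stage_split g_def intro!: sum.cong)
  then have dr: "((\<lambda>w. r w mu t) has_derivative (\<lambda>h. stage_jacobian Jr a c dt mu u k n i *v h))
      (at (g (u 0) + \<beta> *\<^sub>R Ks (u 0) n i))"
    unfolding stage_jacobian_def t_def by (simp only: Jr)
  have eq: "\<forall>\<^sub>F v in nhds (u 0). M *v Ks v n i = dt n *\<^sub>R r (g v + \<beta> *\<^sub>R Ks v n i) mu t"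
    using eventually_nhds_in_open[OF V_open V_mem] by eventually_elim
      (use flow_eqs n i in \<open>auto simp: dirk_eqs_def stage_split g_def t_def\<close>)
  have inv: "invertible (M - (\<beta> * dt n) *\<^sub>R stage_jacobian Jr a c dt mu u k n i)"
    using stage_nonsing[OF n i] by (simp add: \<beta>_def)
  obtain L where L: "((\<lambda>v. Ks v n i) has_derivative L) (at (u 0))"
      "\<And>h. M *v L h = dt n *\<^sub>R (stage_jacobian Jr a c dt mu u k n i *v (g' h + \<beta> *\<^sub>R L h))"
    using implicit_stage_has_derivative[OF conjunct2[OF flow_branch[OF n i]] dg dr eq inv] by blast
  moreover have "L = DK n i"
    using L(1) by (rule frechet_derivative_at)
  ultimately show "(\<lambda>v. Ks v n i) differentiable (at (u 0))"
    and "M *v DK n i h = dt n *\<^sub>R (stage_jacobian Jr a c dt mu u k n i *v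
           stage a (\<lambda>m. DU m h) (\<lambda>m l. DK m l h) n i)"
    by (auto simp: differentiable_def stage_split g'_def)
qed

lemma stage_differentiable:
  assumes n: "n \<in> {1..Nt}" and prev: "(\<lambda>v. Us v (n - 1)) differentiable (at (u 0))"
  shows "i \<in> {1..s} \<Longrightarrow> (\<lambda>v. Ks v n i) differentiable (at (u 0))"
proof (induction i rule: less_induct)
  case (less i)
  show ?case
    by (rule stage_has_derivative(1)[OF n less.prems prev]) (use less in auto)
qed

lemma flow_step_has_derivative:
  assumes n: "n \<in> {1..Nt}" and prev: "(\<lambda>v. Us v (n - 1)) differentiable (at (u 0))"
  shows "((\<lambda>v. Us v n) has_derivative (\<lambda>h. DU (n - 1) h + (\<Sum>i = 1..s. b i *\<^sub>R DK n i h))) (at (u 0))"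
proof -
  have "((\<lambda>v. Us v (n - 1) + (\<Sum>i = 1..s. b i *\<^sub>R Ks v n i)) has_derivative
      (\<lambda>h. DU (n - 1) h + (\<Sum>i = 1..s. b i *\<^sub>R DK n i h))) (at (u 0))"
    using prev stage_differentiable[OF n prev]
    by (intro has_derivative_add has_derivative_sum has_derivative_scaleR_right)
      (auto simp: frechet_derivative_works)
  then show ?thesis
    by (rule has_derivative_transform_within_open[OF _ V_open V_mem])
      (use flow_eqs n in \<open>auto simp: dirk_eqs_def\<close>)
qed

lemma flow_initial_has_derivative: "((\<lambda>v. Us v 0) has_derivative (\<lambda>h. h)) (at (u 0))"
  by (rule has_derivative_transform_within_open[OF has_derivative_ident V_open V_mem])
    (simp add: flow_init)

lemma flow_differentiable: "n \<le> Nt \<Longrightarrow> (\<lambda>v. Us v n) differentiable (at (u 0))"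
proof (induction n)
  case 0
  show ?case using flow_initial_has_derivative by (auto simp: differentiable_def)
next
  case (Suc n)
  then show ?case
    using flow_step_has_derivative[of "Suc n"] by (auto simp: differentiable_def)
qed

lemma flow_linearization:
  "DU 0 h = h"
  "linearized_dirk_eqs M (stage_jacobian Jr a c dt mu u k) a b dt Nt s (\<lambda>n. DU n h) (\<lambda>n i. DK n i h)"
proof -
  show "DU 0 h = h"
    using frechet_derivative_at[OF flow_initial_has_derivative, symmetric] by simp
  show "linearized_dirk_eqs M (stage_jacobian Jr a c dt mu u k) a b dt Nt s (\<lambda>n. DU n h) (\<lambda>n i. DK n i h)"
    unfolding linearized_dirk_eqs_def
  proof
    fix n assume n: "n \<in> {1..Nt}"
    then have prev: "(\<lambda>v. Us v (n - 1)) differentiable (at (u 0))"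
      by (intro flow_differentiable) auto
    show "DU n h = DU (n - 1) h + (\<Sum>i = 1..s. b i *\<^sub>R DK n i h) \<and>
        (\<forall>i \<in> {1..s}. M *v DK n i h = dt n *\<^sub>R (stage_jacobian Jr a c dt mu u k n i *v
           stage a (\<lambda>m. DU m h) (\<lambda>m l. DK m l h) n i))"
      using fun_cong[OF frechet_derivative_at[OF flow_step_has_derivative[OF n prev]], of h]
        stage_has_derivative(2)[OF n _ prev] stage_differentiable[OF n prev] by simp
  qed
qed

end

section \<open>The adjoint recursion\<close>

definition adjoint_step :: "real^'n^'n \<Rightarrow> (nat \<Rightarrow> nat \<Rightarrow> real^'n^'n) \<Rightarrow> (nat \<Rightarrow> nat \<Rightarrow> real)
    \<Rightarrow> (nat \<Rightarrow> real) \<Rightarrow> (nat \<Rightarrow> real) \<Rightarrow> nat \<Rightarrow> (nat \<Rightarrow> real^'n) \<Rightarrow> (nat \<Rightarrow> nat \<Rightarrow> real^'n)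
    \<Rightarrow> nat \<Rightarrow> (nat \<Rightarrow> real^'n) \<Rightarrow> (nat \<Rightarrow> nat \<Rightarrow> real^'n) \<Rightarrow> bool" where
  "adjoint_step M A a b dt s gu gk n lam kap \<longleftrightarrow>
     lam (n - 1) = lam n + gu (n - 1) + (\<Sum>i = 1..s. dt n *\<^sub>R (transpose (A n i) *v kap n i)) \<and>
     (\<forall>i \<in> {1..s}. transpose M *v kap n i = gk n i + b i *\<^sub>R lam n +
        (\<Sum>j = i..s. (a j i * dt n) *\<^sub>R (transpose (A n j) *v kap n j)))"

lemma adjoint_sys_iff:
  "adjoint_sys M Jr a b c dt mu Nt s u k gu gk lam kap \<longleftrightarrow>
     lam Nt = lam 0 + gu Nt \<and>
     (\<forall>n \<in> {1..Nt}. adjoint_step M (stage_jacobian Jr a c dt mu u k) a b dt s gu gk n lam kap)"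
  by (simp add: adjoint_sys_def adjoint_step_def stage_jacobian_def)

lemma adjoint_step_cong:
  assumes "lam n = lam' n" "lam (n - 1) = lam' (n - 1)" "kap n = kap' n"
  shows "adjoint_step M A a b dt s gu gk n lam kap \<longleftrightarrow> adjoint_step M A a b dt s gu gk n lam' kap'"
  using assms by (simp add: adjoint_step_def)

lemma adjoint_steps_solvable:
  assumes inv: "\<And>n i. n \<in> {1..Nt} \<Longrightarrow> i \<in> {1..s} \<Longrightarrow> invertible (M - (a i i * dt n) *\<^sub>R A n i)"
  shows "\<exists>lam kap. lam Nt = x \<and> (\<forall>n \<in> {1..Nt}. adjoint_step M A a b dt s gu gk n lam kap)"
proof -
  have "\<exists>lam kap. lam Nt = x \<and> (\<forall>n \<in> {l..Nt}. adjoint_step M A a b dt s gu gk n lam kap)"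
    if "1 \<le> l" "l \<le> Suc Nt" for l
    using that(2)
  proof (induction rule: inc_induct)
    case base
    show ?case by auto
  next
    case (step n)
    then obtain lam kap where lam: "lam Nt = x"
      and steps: "\<forall>m \<in> {Suc n..Nt}. adjoint_step M A a b dt s gu gk m lam kap"
      by blast
    have n: "n \<in> {1..Nt}" using step.hyps that(1) by simp
    obtain K where K: "\<forall>i \<in> {1..s}. transpose M *v K i = (gk n i + b i *\<^sub>R lam n) +
        (\<Sum>j = i..s. (a j i * dt n) *\<^sub>R (transpose (A n j) *v K j))"
      using upper_triangular_system_solvable[where s=s and B="transpose M" and C="\<lambda>j. transpose (A n j)"
          and cc="\<lambda>j i. a j i * dt n" and y="\<lambda>i. gk n i + b i *\<^sub>R lam n"]
        invertible_transpose_diff_scaleR[OF inv[OF n]] by auto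
    define lam' where
      "lam' = lam(n - 1 := lam n + gu (n - 1) + (\<Sum>i = 1..s. dt n *\<^sub>R (transpose (A n i) *v K i)))"
    define kap' where "kap' = kap(n := K)"
    have "adjoint_step M A a b dt s gu gk m lam' kap'" if "m \<in> {n..Nt}" for m
    proof (cases "m = n")
      case True
      then show ?thesis
        using n K by (auto simp: adjoint_step_def lam'_def kap'_def add.assoc)
    next
      case False
      with that have m: "m \<in> {Suc n..Nt}" by simp
      then have "lam' m = lam m" "lam' (m - 1) = lam (m - 1)" "kap' m = kap m"
        using n by (auto simp: lam'_def kap'_def)
      then show ?thesis
        using steps m adjoint_step_cong[where lam=lam' and lam'=lam and kap=kap' and kap'=kap and n=m]
        by simp
    qed
    moreover have "lam' Nt = x" using lam n by (auto simp: lam'_def)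
    ultimately show ?case by blast
  qed
  from this[of 1] show ?thesis by simp
qed

lemma adjoint_step_unique:
  assumes inv: "\<And>i. i \<in> {1..s} \<Longrightarrow> invertible (M - (a i i * dt n) *\<^sub>R A n i)"
    and step: "adjoint_step M A a b dt s gu gk n lam kap"
    and step': "adjoint_step M A a b dt s gu gk n lam' kap'"
    and "lam n = lam' n"
  shows "(\<forall>i \<in> {1..s}. kap n i = kap' n i) \<and> lam (n - 1) = lam' (n - 1)"
proof -
  have K: "\<forall>i \<in> {1..s}. transpose M *v kap n i = (gk n i + b i *\<^sub>R lam n) +
      (\<Sum>j = i..s. (a j i * dt n) *\<^sub>R (transpose (A n j) *v kap n j))"
    using step unfolding adjoint_step_def by blast
  have K': "\<forall>i \<in> {1..s}. transpose M *v kap' n i = (gk n i + b i *\<^sub>R lam n) +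
      (\<Sum>j = i..s. (a j i * dt n) *\<^sub>R (transpose (A n j) *v kap' n j))"
    using step' \<open>lam n = lam' n\<close> unfolding adjoint_step_def by simp
  have kap: "\<forall>i \<in> {1..s}. kap n i = kap' n i"
    by (rule upper_triangular_system_unique[OF _ K K']) (simp add: invertible_transpose_diff_scaleR inv)
  then have "(\<Sum>i = 1..s. dt n *\<^sub>R (transpose (A n i) *v kap n i)) =
      (\<Sum>i = 1..s. dt n *\<^sub>R (transpose (A n i) *v kap' n i))"
    by (intro sum.cong) auto
  with step step' \<open>lam n = lam' n\<close> have "lam (n - 1) = lam' (n - 1)"
    unfolding adjoint_step_def by simp
  with kap show ?thesis by blast
qed

lemma adjoint_steps_unique:
  assumes inv: "\<And>n i. n \<in> {1..Nt} \<Longrightarrow> i \<in> {1..s} \<Longrightarrow> invertible (M - (a i i * dt n) *\<^sub>R A n i)"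
    and steps: "\<forall>n \<in> {1..Nt}. adjoint_step M A a b dt s gu gk n lam kap"
    and steps': "\<forall>n \<in> {1..Nt}. adjoint_step M A a b dt s gu gk n lam' kap'"
    and final: "lam Nt = lam' Nt"
  shows "(\<forall>n \<le> Nt. lam n = lam' n) \<and> (\<forall>n \<in> {1..Nt}. \<forall>i \<in> {1..s}. kap n i = kap' n i)"
proof -
  have step_unique: "lam n = lam' n \<Longrightarrow> (\<forall>i \<in> {1..s}. kap n i = kap' n i) \<and> lam (n - 1) = lam' (n - 1)"
    if "n \<in> {1..Nt}" for n
    using adjoint_step_unique[OF inv[OF that] bspec[OF steps that] bspec[OF steps' that]] .
  have lam_eq: "lam (Nt - m) = lam' (Nt - m)" for m
  proof (induction m)
    case 0
    show ?case using final by simp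
  next
    case (Suc m)
    show ?case
    proof (cases "m < Nt")
      case True
      then have "Nt - m \<in> {1..Nt}" and "Nt - m - 1 = Nt - Suc m" by auto
      with step_unique Suc.IH show ?thesis by metis
    next
      case False
      with Suc.IH show ?thesis by simp
    qed
  qed
  have "lam n = lam' n" if "n \<le> Nt" for n
    using lam_eq[of "Nt - n"] that by simp
  with step_unique show ?thesis by simp
qed

lemma adjoint_stage_duality:
  fixes M :: "real^'n^'n" and A :: "nat \<Rightarrow> real^'n^'n"
  assumes tangent: "\<forall>i \<in> {1..s}. M *v dk i = h *\<^sub>R (A i *v (\<delta> + (\<Sum>j = 1..i. a i j *\<^sub>R dk j)))"
    and adjoint: "\<forall>i \<in> {1..s}. transpose M *v kap i =
        gk i + b i *\<^sub>R lam + (\<Sum>j = i..s. (a j i * h) *\<^sub>R (transpose (A j) *v kap j))"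
  shows "(\<Sum>i = 1..s. h *\<^sub>R (transpose (A i) *v kap i)) \<bullet> \<delta> =
    (\<Sum>i = 1..s. gk i \<bullet> dk i) + lam \<bullet> (\<Sum>i = 1..s. b i *\<^sub>R dk i)"
proof -
  \<comment> \<open>Evaluate \<open>\<Sum>i. kap i \<bullet> (M *v dk i)\<close> once with the adjoint and once with the linearized stage
    equations; the coupling terms \<open>F\<close> agree after swapping the triangular double sum.\<close>
  define F where "F i j = (a i j * h) * ((transpose (A i) *v kap i) \<bullet> dk j)" for i j
  have "(\<Sum>i = 1..s. kap i \<bullet> (M *v dk i)) = (\<Sum>i = 1..s. gk i \<bullet> dk i + b i * (lam \<bullet> dk i) + (\<Sum>j = i..s. F j i))"
  proof (rule sum.cong)
    fix i assume "i \<in> {1..s}"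
    then have "kap i \<bullet> (M *v dk i) = (gk i + b i *\<^sub>R lam + (\<Sum>j = i..s. (a j i * h) *\<^sub>R (transpose (A j) *v kap j))) \<bullet> dk i"
      using adjoint by (simp flip: inner_transpose_matrix_vector)
    then show "kap i \<bullet> (M *v dk i) = gk i \<bullet> dk i + b i * (lam \<bullet> dk i) + (\<Sum>j = i..s. F j i)"
      by (simp add: inner_add_left inner_sum_left F_def)
  qed simp
  also have "\<dots> = (\<Sum>i = 1..s. gk i \<bullet> dk i) + (\<Sum>i = 1..s. b i * (lam \<bullet> dk i)) + (\<Sum>i = 1..s. \<Sum>j = 1..i. F i j)"
    by (simp only: sum.distrib sum_upper_triangle_swap[where G="\<lambda>i j. F j i"])
  finally have by_adjoint: "(\<Sum>i = 1..s. kap i \<bullet> (M *v dk i)) =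
      (\<Sum>i = 1..s. gk i \<bullet> dk i) + lam \<bullet> (\<Sum>i = 1..s. b i *\<^sub>R dk i) + (\<Sum>i = 1..s. \<Sum>j = 1..i. F i j)"
    by (simp add: inner_sum_right)
  have "(\<Sum>i = 1..s. kap i \<bullet> (M *v dk i)) = (\<Sum>i = 1..s. h * ((transpose (A i) *v kap i) \<bullet> \<delta>) + (\<Sum>j = 1..i. F i j))"
  proof (rule sum.cong)
    fix i assume "i \<in> {1..s}"
    then have "kap i \<bullet> (M *v dk i) = h * ((transpose (A i) *v kap i) \<bullet> (\<delta> + (\<Sum>j = 1..i. a i j *\<^sub>R dk j)))"
      using tangent by (simp add: inner_transpose_matrix_vector)
    then show "kap i \<bullet> (M *v dk i) = h * ((transpose (A i) *v kap i) \<bullet> \<delta>) + (\<Sum>j = 1..i. F i j)"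
      by (simp add: inner_add_right inner_sum_right F_def sum_distrib_left algebra_simps)
  qed simp
  with by_adjoint show ?thesis
    by (simp add: sum.distrib inner_sum_left sum_distrib_left)
qed

lemma adjoint_duality:
  assumes tangent: "linearized_dirk_eqs M A a b dt Nt s du dk"
    and steps: "\<forall>n \<in> {1..Nt}. adjoint_step M A a b dt s gu gk n lam kap"
  shows "lam 0 \<bullet> du 0 =
    lam Nt \<bullet> du Nt + (\<Sum>n = 1..Nt. gu (n - 1) \<bullet> du (n - 1) + (\<Sum>i = 1..s. gk n i \<bullet> dk n i))"
proof -
  have "lam 0 \<bullet> du 0 =
      lam N \<bullet> du N + (\<Sum>n = 1..N. gu (n - 1) \<bullet> du (n - 1) + (\<Sum>i = 1..s. gk n i \<bullet> dk n i))"
    if "N \<le> Nt" for N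
    using that
  proof (induction N)
    case 0
    show ?case by simp
  next
    case (Suc N)
    then have n: "Suc N \<in> {1..Nt}" by simp
    have du: "du (Suc N) = du N + (\<Sum>i = 1..s. b i *\<^sub>R dk (Suc N) i)"
      and stages: "\<forall>i \<in> {1..s}. M *v dk (Suc N) i =
        dt (Suc N) *\<^sub>R (A (Suc N) i *v (du N + (\<Sum>j = 1..i. a i j *\<^sub>R dk (Suc N) j)))"
      using tangent n by (auto simp: linearized_dirk_eqs_def stage_def)
    have lam: "lam N = lam (Suc N) + gu N + (\<Sum>i = 1..s. dt (Suc N) *\<^sub>R (transpose (A (Suc N) i) *v kap (Suc N) i))"
      and adjoint: "\<forall>i \<in> {1..s}. transpose M *v kap (Suc N) i = gk (Suc N) i + b i *\<^sub>R lam (Suc N) +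
        (\<Sum>j = i..s. (a j i * dt (Suc N)) *\<^sub>R (transpose (A (Suc N) j) *v kap (Suc N) j))"
      using bspec[OF steps n] by (simp_all add: adjoint_step_def)
    have "lam N \<bullet> du N = lam (Suc N) \<bullet> du (Suc N) + (gu N \<bullet> du N + (\<Sum>i = 1..s. gk (Suc N) i \<bullet> dk (Suc N) i))"
      unfolding lam du inner_add_left inner_add_right adjoint_stage_duality[OF stages adjoint]
      by simp
    with Suc show ?case by simp
  qed
  from this[of Nt] show ?thesis by simp
qed

lemma adjoint_initial_difference:
  fixes J :: "real^'n^'n"
  assumes tangent: "\<And>\<delta>. \<exists>du dk. du 0 = \<delta> \<and> du Nt = J *v \<delta> \<and> linearized_dirk_eqs M A a b dt Nt s du dk"
    and steps: "\<forall>n \<in> {1..Nt}. adjoint_step M A a b dt s gu gk n lam kap"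
    and steps': "\<forall>n \<in> {1..Nt}. adjoint_step M A a b dt s gu gk n lam' kap'"
  shows "lam 0 - lam' 0 = transpose J *v (lam Nt - lam' Nt)"
proof (rule vector_eq_rdot[THEN iffD1], rule allI)
  fix \<delta>
  obtain du dk where "du 0 = \<delta>" "du Nt = J *v \<delta>" and lin: "linearized_dirk_eqs M A a b dt Nt s du dk"
    using tangent by blast
  with adjoint_duality[OF lin steps] adjoint_duality[OF lin steps']
  show "(lam 0 - lam' 0) \<bullet> \<delta> = (transpose J *v (lam Nt - lam' Nt)) \<bullet> \<delta>"
    by (simp add: inner_diff_left inner_transpose_matrix_vector)
qed

lemma periodic_adjoint_ex1:
  fixes J :: "real^'n^'n"
  assumes inv: "\<And>n i. n \<in> {1..Nt} \<Longrightarrow> i \<in> {1..s} \<Longrightarrow> invertible (M - (a i i * dt n) *\<^sub>R A n i)"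
    and tangent: "\<And>\<delta>. \<exists>du dk. du 0 = \<delta> \<and> du Nt = J *v \<delta> \<and> linearized_dirk_eqs M A a b dt Nt s du dk"
    and jac: "invertible (J - mat 1)"
  shows "\<exists>lam kap. lam Nt = lam 0 + gu Nt \<and> (\<forall>n \<in> {1..Nt}. adjoint_step M A a b dt s gu gk n lam kap) \<and>
    (\<forall>lam' kap'. lam' Nt = lam' 0 + gu Nt \<and> (\<forall>n \<in> {1..Nt}. adjoint_step M A a b dt s gu gk n lam' kap') \<longrightarrow>
       (\<forall>n \<le> Nt. lam' n = lam n) \<and> (\<forall>n \<in> {1..Nt}. \<forall>i \<in> {1..s}. kap' n i = kap n i))"
proof -
  let ?steps = "\<lambda>lam kap. \<forall>n \<in> {1..Nt}. adjoint_step M A a b dt s gu gk n lam kap"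
  have diff: "lam 0 - lam' 0 = transpose J *v (lam Nt - lam' Nt)"
    if "?steps lam kap" "?steps lam' kap'" for lam kap lam' kap'
    using adjoint_initial_difference[OF tangent that] .
  obtain lam\<^sub>0 kap\<^sub>0 where lam\<^sub>0: "lam\<^sub>0 Nt = 0" "?steps lam\<^sub>0 kap\<^sub>0"
    using adjoint_steps_solvable[where M=M and A=A and a=a and dt=dt, OF inv] by blast
  obtain x where x: "x = transpose J *v x + (lam\<^sub>0 0 + gu Nt)"
    using invertible_imp_ex1_fixpoint_transpose[OF jac] by blast
  obtain lam kap where lam: "lam Nt = x" "?steps lam kap"
    using adjoint_steps_solvable[where M=M and A=A and a=a and dt=dt, OF inv] by blast
  have periodic: "lam Nt = lam 0 + gu Nt"
    using diff[OF lam(2) lam\<^sub>0(2)] lam(1) lam\<^sub>0(1) x by (simp add: algebra_simps)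
  have "(\<forall>n \<le> Nt. lam' n = lam n) \<and> (\<forall>n \<in> {1..Nt}. \<forall>i \<in> {1..s}. kap' n i = kap n i)"
    if periodic': "lam' Nt = lam' 0 + gu Nt" and steps': "?steps lam' kap'" for lam' kap'
  proof (rule adjoint_steps_unique[where M=M and A=A and a=a and dt=dt, OF inv steps' lam(2)])
    have "lam' Nt - lam Nt = transpose J *v (lam' Nt - lam Nt) + 0"
      using diff[OF steps' lam(2)] periodic periodic' by (simp add: algebra_simps)
    moreover have "(0 :: real^'n) = transpose J *v 0 + 0" by simp
    ultimately show "lam' Nt = lam Nt"
      using invertible_imp_ex1_fixpoint_transpose[OF jac, of 0] by (metis eq_iff_diff_eq_0)
  qed
  with periodic lam(2) show ?thesis by blast
qed

theorem mainTheorem1: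
  fixes M :: "real^'n^'n"
    and r :: "real^'n \<Rightarrow> real^'m \<Rightarrow> real \<Rightarrow> real^'n"
    and Jr :: "real^'n \<Rightarrow> real^'m \<Rightarrow> real \<Rightarrow> real^'n^'n"
    and a :: "nat \<Rightarrow> nat \<Rightarrow> real" and b c dt :: "nat \<Rightarrow> real"
    and Nt s :: nat and mu :: "real^'m"
    and u :: "nat \<Rightarrow> real^'n" and k :: "nat \<Rightarrow> nat \<Rightarrow> real^'n"
    and F :: "(nat \<Rightarrow> real^'n) \<Rightarrow> (nat \<Rightarrow> nat \<Rightarrow> real^'n) \<Rightarrow> real^'m \<Rightarrow> real"
    and Gu :: "(nat \<Rightarrow> real^'n) \<Rightarrow> (nat \<Rightarrow> nat \<Rightarrow> real^'n) \<Rightarrow> real^'m \<Rightarrow> nat \<Rightarrow> real^'n"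
    and Gk :: "(nat \<Rightarrow> real^'n) \<Rightarrow> (nat \<Rightarrow> nat \<Rightarrow> real^'n) \<Rightarrow> real^'m \<Rightarrow> nat \<Rightarrow> nat \<Rightarrow> real^'n"
    and Gm :: "(nat \<Rightarrow> real^'n) \<Rightarrow> (nat \<Rightarrow> nat \<Rightarrow> real^'n) \<Rightarrow> real^'m \<Rightarrow> real^'m"
    and V :: "(real^'n) set"
    and Us :: "real^'n \<Rightarrow> nat \<Rightarrow> real^'n"
    and Ks :: "real^'n \<Rightarrow> nat \<Rightarrow> nat \<Rightarrow> real^'n"
    and J :: "real^'n^'n"
  assumes Nt_pos: "0 < Nt" and s_pos: "0 < s"
    and r_C1: "\<exists>D :: (real^'n) \<times> (real^'m) \<times> real \<Rightarrow> ((real^'n) \<times> (real^'m) \<times> real) \<Rightarrow>\<^sub>L (real^'n).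
                 (\<forall>x. ((\<lambda>(v, m, t). r v m t) has_derivative blinfun_apply (D x)) (at x))
                 \<and> continuous_on UNIV D"
    and Jr: "\<And>v m t. ((\<lambda>w. r w m t) has_derivative (\<lambda>h. Jr v m t *v h)) (at v)"
    and dirk_lower: "\<And>i j. i \<in> {1..s} \<Longrightarrow> j \<in> {1..s} \<Longrightarrow> i < j \<Longrightarrow> a i j = 0"
    and dt_pos: "\<And>n. n \<in> {1..Nt} \<Longrightarrow> 0 < dt n"
    and sol: "dirk_eqs M r a b c dt mu Nt s u k"
    and periodic: "u 0 = u Nt"
    and stage_nonsing: "\<And>n i. n \<in> {1..Nt} \<Longrightarrow> i \<in> {1..s} \<Longrightarrow>
          invertible (M - (a i i * dt n) *\<^sub>R Jr (stage a u k n i) mu (tgrid dt (n - 1) + c i * dt n))"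
    and F_C1: "F_C1 Nt s F Gu Gk Gm"
    and V_open: "open V" and V_mem: "u 0 \<in> V"
    and flow_init: "\<And>v. v \<in> V \<Longrightarrow> Us v 0 = v"
    and flow_eqs: "\<And>v. v \<in> V \<Longrightarrow> dirk_eqs M r a b c dt mu Nt s (Us v) (Ks v)"
    and flow_branch: "\<And>n i. n \<in> {1..Nt} \<Longrightarrow> i \<in> {1..s} \<Longrightarrow>
          Ks (u 0) n i = k n i \<and> continuous (at (u 0)) (\<lambda>v. Ks v n i)"
    and flow_deriv: "((\<lambda>v. Us v Nt) has_derivative (\<lambda>h. J *v h)) (at (u 0))"
    and jac_nonsing: "invertible (J - mat 1)"
  shows "\<exists>lam kap. adjoint_sys M Jr a b c dt mu Nt s u k (Gu u k mu) (Gk u k mu) lam kap \<and>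
           (\<forall>lam' kap'. adjoint_sys M Jr a b c dt mu Nt s u k (Gu u k mu) (Gk u k mu) lam' kap' \<longrightarrow>
              (\<forall>n \<le> Nt. lam' n = lam n) \<and>
              (\<forall>n \<in> {1..Nt}. \<forall>i \<in> {1..s}. kap' n i = kap n i))"
proof -
  interpret dirk_flow M r Jr a b c dt Nt s mu u k V Us Ks
    by unfold_locales
      (use Jr sol stage_nonsing V_open V_mem flow_init flow_eqs flow_branch in \<open>simp_all add: stage_jacobian_def\<close>)
  have J: "(\<lambda>h. J *v h) = DU Nt"
    using flow_deriv by (rule frechet_derivative_at)
  have tangent: "\<exists>du dk. du 0 = \<delta> \<and> du Nt = J *v \<delta> \<and>
      linearized_dirk_eqs M (stage_jacobian Jr a c dt mu u k) a b dt Nt s du dk" for \<delta>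
    using flow_linearization[of \<delta>] fun_cong[OF J, of \<delta>]
    by (intro exI[of _ "\<lambda>n. DU n \<delta>"] exI[of _ "\<lambda>n i. DK n i \<delta>"]) simp
  show ?thesis
    using periodic_adjoint_ex1[where A="stage_jacobian Jr a c dt mu u k" and gu="Gu u k mu" and gk="Gk u k mu",
        OF stage_nonsing tangent jac_nonsing]
    unfolding adjoint_sys_iff by (simp add: stage_jacobian_def)
qed

end
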